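(* Let $n\ge1$ and let $x_1\ge x_2\ge\dots\ge x_n$ be positive integers with $\sum_{i\in[n]}2^{-x_i}\ge 1$. Then there exists a family $\mathcal L=\{L_i\}_{i\in[n]}$ of sets of positive integers with $|L_i|=x_i$ for every $i\in[n]$ such that the discrete interval hypergraph $H_n$ does not admit a unique-maximum coloring from $\mathcal L$. (One such family is $L_i=\{c : x_1+1-x_i\le c\le x_1\}$.)
   Context: For $n\ge1$, $[n]=\{1,\dots,n\}$ and for $s\le t$ in $[n]$, $[s,t]=\{i: s\le i\le t\}$. The discrete interval hypergraph $H_n$ has vertex set $[n]$ and hyperedges all $[s,t]$ with $s\le t$, $s,t\in[n]$. A coloring $C\colon[n]\to\mathbb Z_{>0}$ is a unique-maximum coloring if in every hyperedge the maximum color is attained by exactly one vertex. $H_n$ admits a unique-maximum coloring from $\mathcal L$ if there is a unique-maximum coloring $C$ with $C(i)\in L_i$ for all $i$. *)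

theory Defs
  imports Complex_Main
begin

text \<open>Unique-maximum coloring of the discrete interval hypergraph H_n on vertex set {1..n}:
  colors are positive integers, and in every interval [s,t] (1 <= s <= t <= n)
  the maximum color is attained by exactly one vertex.\<close>
definition unique_max_coloring :: "nat \<Rightarrow> (nat \<Rightarrow> nat) \<Rightarrow> bool" where
  "unique_max_coloring n C \<longleftrightarrow>
     (\<forall>i\<in>{1..n}. C i > 0) \<and>
     (\<forall>s t. 1 \<le> s \<and> s \<le> t \<and> t \<le> n \<longrightarrow>
        card {i \<in> {s..t}. C i = Max (C ` {s..t})} = 1)"

definition admits_um_coloring_from :: "nat \<Rightarrow> (nat \<Rightarrow> nat set) \<Rightarrow> bool" where
  "admits_um_coloring_from n L \<longleftrightarrow>
     (\<exists>C. unique_max_coloring n C \<and> (\<forall>i\<in>{1..n}. C i \<in> L i))"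

end

theory Submission
  imports Defs
begin

(* Take K = x 1 and the lists L i = {K + 1 - x i .. K}.  Suppose C were a
   unique-maximum coloring of H_n from these lists.  Writing mu i = Min (C ` {i..n}) for
   the suffix minima of C, we prove the Kraft-type inequality
        sum_{i=1..n} 2^(mu i)  <  2^(Max (C ` {1..n}) + 1)  <=  2^(K+1),
   by induction on the interval, splitting it at the position of its (unique) maximum.
   Since mu i is some colour C j with j >= i, and x is non-increasing, mu i >= K + 1 - x i,
   so sum (1/2)^(x i) <= sum 2^(mu i) / 2^(K+1) < 1, contradicting the hypothesis. *)

definition unique_max_on :: "(nat \<Rightarrow> nat) \<Rightarrow> nat \<Rightarrow> nat \<Rightarrow> bool" where
  "unique_max_on C s t \<longleftrightarrow> (\<forall>a b. s \<le> a \<longrightarrow> a \<le> b \<longrightarrow> b \<le> t \<longrightarrow>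
      (\<exists>m\<in>{a..b}. \<forall>j\<in>{a..b}. j \<noteq> m \<longrightarrow> C j < C m))"

lemma unique_max_on_subinterval:
  "unique_max_on C s t \<Longrightarrow> s \<le> s' \<Longrightarrow> t' \<le> t \<Longrightarrow> unique_max_on C s' t'"
  unfolding unique_max_on_def by (meson order_trans)

lemma unique_max_coloring_imp_unique_max_on:
  assumes "unique_max_coloring n C"
  shows "unique_max_on C 1 n"
  unfolding unique_max_on_def
proof (intro allI impI)
  fix a b assume ab: "1 \<le> a" "a \<le> b" "b \<le> n"
  hence "card {i \<in> {a..b}. C i = Max (C ` {a..b})} = 1"
    using assms unfolding unique_max_coloring_def by blast
  then obtain m where m: "{i \<in> {a..b}. C i = Max (C ` {a..b})} = {m}"
    by (auto simp: card_Suc_eq)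
  hence m_in: "m \<in> {a..b}" and m_max: "C m = Max (C ` {a..b})" by auto
  show "\<exists>m\<in>{a..b}. \<forall>j\<in>{a..b}. j \<noteq> m \<longrightarrow> C j < C m"
  proof (intro bexI[OF _ m_in] ballI impI)
    fix j assume j: "j \<in> {a..b}" "j \<noteq> m"
    have "C j \<le> Max (C ` {a..b})" using j by (intro Max_ge) auto
    moreover have "C j \<noteq> Max (C ` {a..b})" using m j by auto
    ultimately show "C j < C m" using m_max by simp
  qed
qed

lemma sum_split_at:
  fixes f :: "nat \<Rightarrow> 'a::comm_monoid_add"
  assumes "m \<in> {s..t}"
  shows "(\<Sum>i=s..t. f i) = (\<Sum>i\<in>{s..<m}. f i) + f m + (\<Sum>i=Suc m..t. f i)"
proof -
  have "{s..t} = {s..<m} \<union> ({m} \<union> {Suc m..t})" using assms by auto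
  hence "(\<Sum>i=s..t. f i) = sum f ({s..<m} \<union> ({m} \<union> {Suc m..t}))" by simp
  also have "\<dots> = (\<Sum>i\<in>{s..<m}. f i) + (\<Sum>i\<in>{m} \<union> {Suc m..t}. f i)"
    by (rule sum.union_disjoint) auto
  also have "(\<Sum>i\<in>{m} \<union> {Suc m..t}. f i) = f m + (\<Sum>i=Suc m..t. f i)"
    by (subst sum.union_disjoint) auto
  finally show ?thesis by (simp add: add.assoc)
qed

lemma suffix_Min_split:
  fixes C :: "nat \<Rightarrow> nat"
  assumes "i < m" "m \<le> t"
  shows "Min (C ` {i..t}) = min (Min (C ` {i..m-1})) (Min (C ` {m..t}))"
proof -
  have "{i..t} = {i..m-1} \<union> {m..t}" using assms by auto
  hence "C ` {i..t} = C ` {i..m-1} \<union> C ` {m..t}" by auto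
  thus ?thesis using assms by (simp add: Min_Un)
qed

text \<open>The truncation is what makes the induction work: in the part left of the
  maximum m, the suffix minima over [i,t] are those over
  [i,m-1] truncated at Min (C ` {m..t}).  Each of the two parts
  contributes at most 2^C m, and the extra term absorbs the term at m.\<close>
lemma truncated_suffix_min_bound:
  fixes C :: "nat \<Rightarrow> nat"
  assumes "unique_max_on C s t" "s \<le> t"
  shows "(\<Sum>i=s..t. (2::nat) ^ min r (Min (C ` {i..t}))) + 2 ^ min r (Min (C ` {s..t}))
           \<le> 2 ^ (Max (C ` {s..t}) + 1)"
  using assms
proof (induction "t - s" arbitrary: s t r rule: less_induct)
  case less
  obtain m where m: "m \<in> {s..t}" and m_strict: "\<forall>j\<in>{s..t}. j \<noteq> m \<longrightarrow> C j < C m"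
    using less.prems unfolding unique_max_on_def by blast
  have Max_eq: "Max (C ` {s..t}) = C m"
    using m m_strict by (intro Max_eqI) (auto intro: less_imp_le)
  define \<rho> where "\<rho> = Min (C ` {m..t})"
  define r' where "r' = min r \<rho>"
  have \<rho>_le: "\<rho> \<le> C m" unfolding \<rho>_def using m by (intro Min_le) auto
  define f where "f i = (2::nat) ^ min r (Min (C ` {i..t}))" for i
  have left: "(\<Sum>i\<in>{s..<m}. f i) + 2 ^ min r (Min (C ` {s..t})) \<le> (2::nat) ^ C m"
  proof (cases "s = m")
    case True
    hence "min r (Min (C ` {s..t})) \<le> C m" using \<rho>_le unfolding \<rho>_def by simp
    thus ?thesis using True by (simp add: power_increasing)
  next
    case False
    hence sm: "s < m" using m by auto
    have f_left: "f i = 2 ^ min r' (Min (C ` {i..m-1}))" if "i \<in> {s..m-1}" for i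
    proof -
      have "Min (C ` {i..t}) = min (Min (C ` {i..m-1})) \<rho>"
        using suffix_Min_split[of i m t C] that sm m unfolding \<rho>_def by force
      thus ?thesis unfolding f_def r'_def by (simp add: min.commute min.left_commute)
    qed
    have "{s..<m} = {s..m-1}" using sm by auto
    hence sum_left: "(\<Sum>i\<in>{s..<m}. f i) = (\<Sum>i=s..m-1. 2 ^ min r' (Min (C ` {i..m-1})))"
      using f_left by simp
    have IH: "(\<Sum>i=s..m-1. (2::nat) ^ min r' (Min (C ` {i..m-1})))
              + 2 ^ min r' (Min (C ` {s..m-1})) \<le> 2 ^ (Max (C ` {s..m-1}) + 1)"
      using less.hyps[of "m-1" s r'] sm m less.prems
        unique_max_on_subinterval[of C s t s "m-1"] by auto
    have "Max (C ` {s..m-1}) < C m" using m_strict m sm by auto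
    hence "(2::nat) ^ (Max (C ` {s..m-1}) + 1) \<le> 2 ^ C m" by (intro power_increasing) auto
    moreover have "min r (Min (C ` {s..t})) = min r' (Min (C ` {s..m-1}))"
    proof -
      have "Min (C ` {s..t}) = min (Min (C ` {s..m-1})) \<rho>"
        using suffix_Min_split[of s m t C] sm m unfolding \<rho>_def by simp
      thus ?thesis unfolding r'_def by (simp add: min.commute min.left_commute)
    qed
    ultimately show ?thesis using IH sum_left by simp
  qed
  have right: "(\<Sum>i=Suc m..t. f i) + 2 ^ r' \<le> (2::nat) ^ C m"
  proof (cases "m = t")
    case True
    have "r' \<le> C m" using \<rho>_le unfolding r'_def by simp
    thus ?thesis using True by (simp add: power_increasing)
  next
    case False
    hence mt: "m < t" using m by auto
    have IH: "(\<Sum>i=Suc m..t. f i) + 2 ^ min r (Min (C ` {Suc m..t}))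
              \<le> 2 ^ (Max (C ` {Suc m..t}) + 1)"
      unfolding f_def using less.hyps[of t "Suc m" r] mt m less.prems
        unique_max_on_subinterval[of C s t "Suc m" t] by auto
    have "Max (C ` {Suc m..t}) < C m" using m_strict m mt by auto
    hence "(2::nat) ^ (Max (C ` {Suc m..t}) + 1) \<le> 2 ^ C m" by (intro power_increasing) auto
    moreover have "\<rho> = Min (C ` {Suc m..t})"
    proof -
      have "C ` {m..t} = insert (C m) (C ` {Suc m..t})" using mt by (auto simp: atLeastAtMost_insertL[symmetric])
      moreover have "Min (C ` {Suc m..t}) < C m" using m_strict m mt by (subst Min_less_iff) auto
      ultimately show ?thesis unfolding \<rho>_def using mt by (simp add: Min_insert)
    qed
    ultimately show ?thesis using IH unfolding r'_def by simp
  qed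
  have "f m = 2 ^ r'" unfolding f_def r'_def \<rho>_def by simp
  hence "(\<Sum>i=s..t. f i) + 2 ^ min r (Min (C ` {s..t})) \<le> 2 ^ C m + 2 ^ C m"
    using left right sum_split_at[OF m, of f] by simp
  thus ?case unfolding f_def Max_eq by simp
qed

lemma suffix_min_kraft:
  fixes C :: "nat \<Rightarrow> nat"
  assumes "unique_max_on C s t" "s \<le> t"
  shows "(\<Sum>i=s..t. (2::nat) ^ Min (C ` {i..t})) < 2 ^ (Max (C ` {s..t}) + 1)"
proof -
  let ?M = "Max (C ` {s..t})"
  have "Min (C ` {i..t}) \<le> ?M" if "i \<in> {s..t}" for i
  proof -
    have "Min (C ` {i..t}) \<le> C i" using that by (intro Min_le) auto
    also have "C i \<le> ?M" using that by (intro Max_ge) auto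
    finally show ?thesis .
  qed
  hence "(\<Sum>i=s..t. (2::nat) ^ Min (C ` {i..t})) = (\<Sum>i=s..t. 2 ^ min ?M (Min (C ` {i..t})))"
    by (intro sum.cong) (auto simp: min_absorb2)
  moreover have "(0::nat) < 2 ^ min ?M (Min (C ` {s..t}))" by simp
  ultimately show ?thesis
    using truncated_suffix_min_bound[OF assms, of ?M] by linarith
qed

lemma suffix_min_lower_bound:
  fixes C x :: "nat \<Rightarrow> nat"
  assumes colours: "\<forall>j\<in>{1..n}. C j \<in> {K + 1 - x j..K}"
    and mono: "\<And>i j. 1 \<le> i \<Longrightarrow> i \<le> j \<Longrightarrow> j \<le> n \<Longrightarrow> x j \<le> x i"
    and pos: "x i > 0" and i: "i \<in> {1..n}"
  shows "K + 1 \<le> x i + Min (C ` {i..n})"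
proof -
  have "Min (C ` {i..n}) \<in> C ` {i..n}" using i by (intro Min_in) auto
  then obtain j where j: "j \<in> {i..n}" "Min (C ` {i..n}) = C j" by auto
  have "K + 1 - x j \<le> C j" using colours j i by auto
  moreover have "x j \<le> x i" using mono[of i j] i j by auto
  ultimately show ?thesis using j pos by linarith
qed

lemma dyadic_sum_less_one:
  fixes x m :: "nat \<Rightarrow> nat"
  assumes bound: "\<And>i. i \<in> A \<Longrightarrow> N \<le> x i + m i"
    and sum_less: "(\<Sum>i\<in>A. (2::nat) ^ m i) < 2 ^ N"
  shows "(\<Sum>i\<in>A. (1/2::real) ^ x i) < 1"
proof -
  have "(\<Sum>i\<in>A. (1/2::real) ^ x i) \<le> (\<Sum>i\<in>A. 2 ^ m i / 2 ^ N)"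
  proof (rule sum_mono)
    fix i assume "i \<in> A"
    hence "(2::real) ^ N \<le> 2 ^ (x i + m i)" using bound by (intro power_increasing) auto
    thus "(1/2::real) ^ x i \<le> 2 ^ m i / 2 ^ N"
      by (simp add: power_add power_one_over field_simps)
  qed
  also have "\<dots> = real (\<Sum>i\<in>A. (2::nat) ^ m i) / 2 ^ N"
    by (simp add: sum_divide_distrib)
  also have "\<dots> < 1"
  proof -
    have "real (\<Sum>i\<in>A. (2::nat) ^ m i) < real ((2::nat) ^ N)"
      using sum_less by (simp only: of_nat_less_iff)
    thus ?thesis by (simp add: divide_less_eq)
  qed
  finally show ?thesis .
qed

theorem theorem2p6:
  fixes n :: nat and x :: "nat \<Rightarrow> nat"
  assumes "n \<ge> 1"
    and "\<And>i j. 1 \<le> i \<Longrightarrow> i \<le> j \<Longrightarrow> j \<le> n \<Longrightarrow> x j \<le> x i"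
    and "\<And>i. i \<in> {1..n} \<Longrightarrow> x i > 0"
    and "(\<Sum>i=1..n. (1/2::real) ^ x i) \<ge> 1"
  shows "\<exists>L :: nat \<Rightarrow> nat set.
           (\<forall>i\<in>{1..n}. card (L i) = x i \<and> (\<forall>c\<in>L i. c > 0)) \<and>
           \<not> admits_um_coloring_from n L"
proof -
  define K where "K = x 1"
  define L where "L i = {K + 1 - x i..K}" for i
  have "x i \<le> K" if "i \<in> {1..n}" for i using assms(2)[of 1 i] that unfolding K_def by auto
  hence lists: "\<forall>i\<in>{1..n}. card (L i) = x i \<and> (\<forall>c\<in>L i. c > 0)"
    using assms(3) unfolding L_def by fastforce
  have "\<not> admits_um_coloring_from n L"
  proof
    assume "admits_um_coloring_from n L"
    then obtain C where C: "unique_max_coloring n C" "\<forall>i\<in>{1..n}. C i \<in> L i"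
      unfolding admits_um_coloring_from_def by blast
    have "Max (C ` {1..n}) \<le> K" using C(2) assms(1) unfolding L_def by auto
    hence "(2::nat) ^ (Max (C ` {1..n}) + 1) \<le> 2 ^ (K + 1)" by (intro power_increasing) auto
    hence "(\<Sum>i=1..n. (2::nat) ^ Min (C ` {i..n})) < 2 ^ (K + 1)"
      using suffix_min_kraft[OF unique_max_coloring_imp_unique_max_on[OF C(1)] assms(1)]
      by linarith
    moreover have "K + 1 \<le> x i + Min (C ` {i..n})" if "i \<in> {1..n}" for i
      using C(2) assms(2,3) that unfolding L_def by (intro suffix_min_lower_bound) auto
    ultimately have "(\<Sum>i=1..n. (1/2::real) ^ x i) < 1" by (rule dyadic_sum_less_one[rotated])
    thus False using assms(4) by simp
  qed
  thus ?thesis using lists by blast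
qed

end
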